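(* The optimal profile $\mathbf{a}^{*}$ lies in $\mathcal{D}(B):=\{\mathbf{a}\in (0,p_{1})\times \ldots \times (0,p_{K}): \sum_{k=1}^{K}c_{k}a_{k} \leq B \}$, i.e., no coordinate $a^{*}_k$ lies on the natural boundary $\{0,p_k\}$.
   Context: Let $V$ be a set of $n$ vertices and let the $\binom{n}{2}$ possible edges be partitioned into $K$ parts $\mathcal{P}_1,\ldots,\mathcal{P}_K$, where every edge in part $k$ has cost $c_k$ with $0<c_k<\infty$. Let $P_k=|\mathcal{P}_k|$ and $p_k=P_k/n$ (the average number of possible edges of part $k$ per vertex). For a budget $B\ge 0$, consider the optimization problem $(\Lambda)$: maximize $H(\mathbf{a}) = - \sum_{k=1}^{K} \left[(p_{k}-a_{k})\log(p_{k}-a_{k})+a_{k}\log(a_{k})\right]$ over $\mathbf{a}=(a_1,\ldots,a_K)$ subject to $\sum_{k=1}^{K}a_{k}c_{k} \leq B$ and $0\leq a_{k} \leq p_{k}$ for all $k\in[K]$. Let $\mathbf{a}^{*}=\mathbf{a}^{*}(B)$ denote its solution. *)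

theory Defs
  imports Complex_Main
begin

definition possible_edges :: "'v set \<Rightarrow> 'v set set" where
  "possible_edges V = {e. e \<subseteq> V \<and> card e = 2}"

definition edge_partition :: "'v set \<Rightarrow> nat \<Rightarrow> (nat \<Rightarrow> 'v set set) \<Rightarrow> bool" where
  "edge_partition V K part \<longleftrightarrow>
     (\<forall>k\<in>{1..K}. part k \<noteq> {}) \<and>
     (\<forall>k\<in>{1..K}. \<forall>l\<in>{1..K}. k \<noteq> l \<longrightarrow> part k \<inter> part l = {}) \<and>
     (\<Union>k\<in>{1..K}. part k) = possible_edges V"

definition pk :: "'v set \<Rightarrow> (nat \<Rightarrow> 'v set set) \<Rightarrow> nat \<Rightarrow> real" where
  "pk V part k = real (card (part k)) / real (card V)"

text \<open>Entropy objective H(a); note ln 0 = 0 in Isabelle, giving 0 log 0 = 0.\<close>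
definition entropyH :: "nat \<Rightarrow> (nat \<Rightarrow> real) \<Rightarrow> (nat \<Rightarrow> real) \<Rightarrow> real" where
  "entropyH K p a = - (\<Sum>k=1..K. (p k - a k) * ln (p k - a k) + a k * ln (a k))"

definition feasible :: "nat \<Rightarrow> (nat \<Rightarrow> real) \<Rightarrow> (nat \<Rightarrow> real) \<Rightarrow> real \<Rightarrow> (nat \<Rightarrow> real) \<Rightarrow> bool" where
  "feasible K p c B a \<longleftrightarrow> (\<Sum>k=1..K. a k * c k) \<le> B \<and> (\<forall>k\<in>{1..K}. 0 \<le> a k \<and> a k \<le> p k)"

definition optimal :: "nat \<Rightarrow> (nat \<Rightarrow> real) \<Rightarrow> (nat \<Rightarrow> real) \<Rightarrow> real \<Rightarrow> (nat \<Rightarrow> real) \<Rightarrow> bool" where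
  "optimal K p c B a \<longleftrightarrow> feasible K p c B a \<and>
     (\<forall>b. feasible K p c B b \<longrightarrow> entropyH K p b \<le> entropyH K p a)"

definition setD :: "nat \<Rightarrow> (nat \<Rightarrow> real) \<Rightarrow> (nat \<Rightarrow> real) \<Rightarrow> real \<Rightarrow> (nat \<Rightarrow> real) set" where
  "setD K p c B = {a. (\<forall>k\<in>{1..K}. 0 < a k \<and> a k < p k) \<and> (\<Sum>k=1..K. c k * a k) \<le> B}"

end

theory Submission
  imports Defs
begin

text \<open>
  Each coordinate contributes the concave term
  \<open>h\<^sub>p(x) = -((p - x) ln (p - x) + x ln x)\<close> to the objective.
  At \<open>x = p\<close> halving \<open>x\<close> gains \<open>p ln 2\<close> and costs nothing extra, so the
  upper boundary is never optimal. At \<open>x = 0\<close> the slope of \<open>h\<^sub>p\<close> is infinite: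
  raising \<open>a\<^sub>k\<close> by \<open>e\<close> gains about \<open>e ln (1/e)\<close>, while paying for it with spare
  budget costs nothing, or, if the budget is tight, lowering some interior
  \<open>a\<^sub>j > 0\<close> by \<open>(c\<^sub>k/c\<^sub>j) e\<close> loses only \<open>O(e)\<close>. Since \<open>B > 0\<close>, a tight budget
  forces such an interior coordinate to exist.
\<close>

definition bin_entropy :: "real \<Rightarrow> real \<Rightarrow> real" where
  "bin_entropy p x = - ((p - x) * ln (p - x) + x * ln x)"

lemma entropyH_eq_sum_bin_entropy: "entropyH K p a = (\<Sum>k=1..K. bin_entropy (p k) (a k))"
  unfolding entropyH_def bin_entropy_def by (simp add: sum_negf[symmetric] algebra_simps)

lemma sum_fun_upd_point:
  fixes g :: "'a \<Rightarrow> 'b \<Rightarrow> real"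
  assumes "finite S" "k \<in> S"
  shows "(\<Sum>i\<in>S. g i ((a(k:=x)) i)) = (\<Sum>i\<in>S. g i (a i)) - g k (a k) + g k x"
proof -
  have "(\<Sum>i\<in>S-{k}. g i ((a(k:=x)) i)) = (\<Sum>i\<in>S-{k}. g i (a i))"
    by (rule sum.cong) auto
  then show ?thesis
    using sum.remove[OF assms, of "\<lambda>i. g i ((a(k:=x)) i)"] sum.remove[OF assms, of "\<lambda>i. g i (a i)"]
    by simp
qed

lemma entropyH_fun_upd:
  assumes "k \<in> {1..K}"
  shows "entropyH K p (a(k:=x)) = entropyH K p a - bin_entropy (p k) (a k) + bin_entropy (p k) x"
  unfolding entropyH_eq_sum_bin_entropy using assms by (rule sum_fun_upd_point[OF finite_atLeastAtMost])

lemma cost_fun_upd: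
  fixes a c :: "nat \<Rightarrow> real"
  assumes "k \<in> {1..K}"
  shows "(\<Sum>i=1..K. (a(k:=x)) i * c i) = (\<Sum>i=1..K. a i * c i) - a k * c k + x * c k"
  using assms by (rule sum_fun_upd_point[OF finite_atLeastAtMost, where g="\<lambda>i y. y * c i"])

lemma feasible_fun_upd:
  assumes "feasible K p c B a" "k \<in> {1..K}" "0 \<le> x" "x \<le> p k"
    and "(\<Sum>i=1..K. a i * c i) - a k * c k + x * c k \<le> B"
  shows "feasible K p c B (a(k := x))"
  using assms cost_fun_upd[OF assms(2), of a x c] unfolding feasible_def by auto

lemma xlnx_ge_tangent:
  assumes "0 < (y::real)" "0 \<le> z"
  shows "y * ln y + (ln y + 1) * (z - y) \<le> z * ln z"
proof (cases "z = 0")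
  case True
  with assms show ?thesis by (simp add: algebra_simps)
next
  case False
  with assms have z: "z > 0" by simp
  have "ln y - ln z \<le> y / z - 1"
    using ln_le_minus_one[of "y/z"] assms z by (simp add: ln_div)
  then have "z * (ln y - ln z) \<le> z * (y / z - 1)"
    using z by (intro mult_left_mono) auto
  then have "z * (ln y - ln z) \<le> y - z"
    using z by (simp add: algebra_simps)
  then show ?thesis by (simp add: algebra_simps)
qed

lemma bin_entropy_half_gain:
  assumes "0 < p"
  shows "bin_entropy p (p / 2) - bin_entropy p p = p * ln 2"
  unfolding bin_entropy_def using assms by (simp add: ln_div algebra_simps)

lemma bin_entropy_gain_from_zero:
  assumes "0 < e" "e \<le> p / 2"
  shows "e * (ln (p / 2) + 1 - ln e) \<le> bin_entropy p e - bin_entropy p 0"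
proof -
  have tangent: "(p - e) * ln (p - e) + (ln (p - e) + 1) * e \<le> p * ln p"
    using xlnx_ge_tangent[of "p - e" p] assms by simp
  have "e * ln (p / 2) \<le> e * ln (p - e)"
    using assms by (intro mult_left_mono) auto
  with tangent show ?thesis unfolding bin_entropy_def by (simp add: algebra_simps)
qed

lemma bin_entropy_zero_lt:
  assumes "0 < e" "e \<le> p / 2"
  shows "bin_entropy p 0 < bin_entropy p e"
proof -
  have "ln e \<le> ln (p / 2)"
    using assms by simp
  then have "0 < e * (ln (p / 2) + 1 - ln e)"
    using assms by (intro mult_pos_pos) linarith+
  with bin_entropy_gain_from_zero[OF assms] show ?thesis by linarith
qed

lemma bin_entropy_loss_le:
  assumes "0 < d" "d \<le> x / 2" "x < q"
  shows "bin_entropy q x - bin_entropy q (x - d) \<le> d * (ln q - ln (x / 2))"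
proof -
  have tangent_x: "(x - d) * ln (x - d) + (ln (x - d) + 1) * d \<le> x * ln x"
    using xlnx_ge_tangent[of "x - d" x] assms by simp
  have tangent_qx: "(q - x + d) * ln (q - x + d) - (ln (q - x + d) + 1) * d \<le> (q - x) * ln (q - x)"
    using xlnx_ge_tangent[of "q - x + d" "q - x"] assms by simp
  have "d * ln (x / 2) \<le> d * ln (x - d)"
    using assms by (intro mult_left_mono) auto
  moreover have "d * ln (q - x + d) \<le> d * ln q"
    using assms by (intro mult_left_mono) auto
  moreover have "q - (x - d) = q - x + d" by simp
  ultimately show ?thesis
    using tangent_x tangent_qx unfolding bin_entropy_def by (simp add: algebra_simps)
qed

lemma bin_entropy_exchange_gain:
  assumes "0 < p" "0 < r" "0 < x" "x < q"
  obtains e where "0 < e" "e \<le> p / 2" "r * e \<le> x / 2"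
    "bin_entropy q x - bin_entropy q (x - r * e) < bin_entropy p e - bin_entropy p 0"
proof -
  define L where "L = ln q - ln (x / 2)"
  \<comment> \<open>the factor \<open>exp (- r L)\<close> makes the gain rate \<open>ln (p/2) + 1 - ln e\<close> exceed the loss rate \<open>r L\<close>\<close>
  define e where "e = min (p / 2) (min ((p / 2) * exp (- (r * L))) (x / (2 * r)))"
  have e_le: "e \<le> p / 2" "e \<le> (p / 2) * exp (- (r * L))" "e \<le> x / (2 * r)"
    unfolding e_def by auto
  have e_pos: "0 < e"
    unfolding e_def using assms by simp
  have re_le: "r * e \<le> x / 2"
    using e_le(3) assms by (simp add: pos_le_divide_eq mult.commute)
  have "ln e \<le> ln ((p / 2) * exp (- (r * L)))"
    using e_pos e_le(2) by simp
  also have "\<dots> = ln (p / 2) - r * L"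
    using assms by (subst ln_mult) auto
  finally have "e * (1 + r * L) \<le> e * (ln (p / 2) + 1 - ln e)"
    using e_pos by (intro mult_left_mono) auto
  moreover have "bin_entropy q x - bin_entropy q (x - r * e) \<le> r * e * L"
    unfolding L_def using bin_entropy_loss_le[of "r * e" x q] assms e_pos re_le by simp
  ultimately have "bin_entropy q x - bin_entropy q (x - r * e) < bin_entropy p e - bin_entropy p 0"
    using bin_entropy_gain_from_zero[OF e_pos e_le(1)] e_pos by (simp add: algebra_simps)
  with e_pos e_le(1) re_le that show ?thesis by blast
qed

lemma optimal_lt_capacity:
  assumes opt: "optimal K p c B a" and k: "k \<in> {1..K}" and "0 < p k" "0 < c k"
  shows "a k < p k"
proof (rule ccontr)
  assume "\<not> a k < p k"
  with opt k have ak: "a k = p k"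
    unfolding optimal_def feasible_def by force
  define b where "b = a(k := p k / 2)"
  have fa: "feasible K p c B a"
    using opt unfolding optimal_def by blast
  have "0 < p k * c k" "p k / 2 * c k = p k * c k / 2" "a k * c k = p k * c k"
    using \<open>0 < p k\<close> \<open>0 < c k\<close> ak by simp_all
  moreover have "(\<Sum>i=1..K. a i * c i) \<le> B"
    using fa unfolding feasible_def by simp
  ultimately have "(\<Sum>i=1..K. a i * c i) - a k * c k + p k / 2 * c k \<le> B"
    by linarith
  then have "feasible K p c B b"
    unfolding b_def using fa k \<open>0 < p k\<close> by (intro feasible_fun_upd) auto
  with opt have "entropyH K p b \<le> entropyH K p a"
    unfolding optimal_def by blast
  moreover have "entropyH K p b = entropyH K p a + p k * ln 2"
    using entropyH_fun_upd[OF k] bin_entropy_half_gain[OF \<open>0 < p k\<close>] ak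
    unfolding b_def by simp
  moreover have "0 < p k * ln 2"
    using \<open>0 < p k\<close> by simp
  ultimately show False by linarith
qed

lemma optimal_pos_of_slack:
  assumes opt: "optimal K p c B a" and slack: "(\<Sum>i=1..K. a i * c i) < B"
    and k: "k \<in> {1..K}" and "0 < p k" "0 < c k"
  shows "0 < a k"
proof (rule ccontr)
  assume "\<not> 0 < a k"
  with opt k have ak: "a k = 0"
    unfolding optimal_def feasible_def by force
  define e where "e = min (p k / 2) ((B - (\<Sum>i=1..K. a i * c i)) / c k)"
  have "0 < (B - (\<Sum>i=1..K. a i * c i)) / c k"
    using slack \<open>0 < c k\<close> by simp
  then have "0 < e"
    using \<open>0 < p k\<close> unfolding e_def by simp
  moreover have "e \<le> p k / 2"
    unfolding e_def by (rule min.cobounded1)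
  ultimately have e: "0 < e" "e \<le> p k / 2" by blast+
  have "e \<le> (B - (\<Sum>i=1..K. a i * c i)) / c k"
    unfolding e_def by simp
  then have cost: "e * c k \<le> B - (\<Sum>i=1..K. a i * c i)"
    using \<open>0 < c k\<close> by (simp add: pos_le_divide_eq)
  define b where "b = a(k := e)"
  have "feasible K p c B b"
    unfolding b_def using opt k ak e cost unfolding optimal_def
    by (intro feasible_fun_upd) auto
  with opt have "entropyH K p b \<le> entropyH K p a"
    unfolding optimal_def by blast
  moreover have "entropyH K p b = entropyH K p a - bin_entropy (p k) 0 + bin_entropy (p k) e"
    using entropyH_fun_upd[OF k] ak unfolding b_def by simp
  ultimately show False
    using bin_entropy_zero_lt[OF e(1,2)] by simp
qed

lemma optimal_pos_of_tight:
  assumes opt: "optimal K p c B a" and tight: "(\<Sum>i=1..K. a i * c i) = B" and "0 < B"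
    and p: "\<forall>i\<in>{1..K}. 0 < p i" and c: "\<forall>i\<in>{1..K}. 0 < c i" and k: "k \<in> {1..K}"
  shows "0 < a k"
proof (rule ccontr)
  assume "\<not> 0 < a k"
  with opt k have ak: "a k = 0"
    unfolding optimal_def feasible_def by force
  obtain j where j: "j \<in> {1..K}" "a j \<noteq> 0"
    using tight \<open>0 < B\<close> by (metis (no_types, lifting) mult_zero_left sum.neutral less_irrefl)
  have pk: "0 < p k" and ck: "0 < c k" and pj: "0 < p j" and cj: "0 < c j"
    using p c k j by auto
  have aj: "0 < a j" "a j < p j"
    using opt j optimal_lt_capacity[OF opt j(1) pj cj] unfolding optimal_def feasible_def by force+
  have jk: "j \<noteq> k" using j ak by auto
  define r where "r = c k / c j"
  have "0 < r" unfolding r_def using ck cj by simp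
  then obtain e where e: "0 < e" "e \<le> p k / 2" "r * e \<le> a j / 2"
    and gain: "bin_entropy (p j) (a j) - bin_entropy (p j) (a j - r * e)
                 < bin_entropy (p k) e - bin_entropy (p k) 0"
    using bin_entropy_exchange_gain[OF pk _ aj] by blast
  define b where "b = (a(k := e))(j := a j - r * e)"
  have upd_k: "(a(k := e)) j = a j" "(a(k := e)) k = e" using jk by auto
  have "(\<Sum>i=1..K. b i * c i) = (\<Sum>i=1..K. (a(k:=e)) i * c i) - a j * c j + (a j - r * e) * c j"
    using cost_fun_upd[OF j(1), of "a(k:=e)" "a j - r * e" c] upd_k unfolding b_def by simp
  also have "(\<Sum>i=1..K. (a(k:=e)) i * c i) = B + e * c k"
    using cost_fun_upd[OF k, of a e c] ak tight by simp
  also have "B + e * c k - a j * c j + (a j - r * e) * c j = B + e * c k - r * e * c j"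
    by (simp add: algebra_simps)
  also have "\<dots> = B" unfolding r_def using cj by simp
  finally have cost: "(\<Sum>i=1..K. b i * c i) = B" .
  have "0 < r * e"
    using e(1) \<open>0 < r\<close> by simp
  then have "0 \<le> a j - r * e" "a j - r * e \<le> p j"
    using e(3) aj by linarith+
  then have "feasible K p c B b"
    using opt cost e pk unfolding optimal_def feasible_def b_def by auto
  with opt have "entropyH K p b \<le> entropyH K p a"
    unfolding optimal_def by blast
  moreover have "entropyH K p b = entropyH K p a - bin_entropy (p k) 0 + bin_entropy (p k) e
                   - bin_entropy (p j) (a j) + bin_entropy (p j) (a j - r * e)"
    using entropyH_fun_upd[OF j(1), of _ "a(k:=e)"] entropyH_fun_upd[OF k, of _ a e] upd_k ak
    unfolding b_def by simp
  ultimately show False using gain by linarith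
qed

lemma optimal_interior:
  assumes opt: "optimal K p c B a" and "0 < B"
    and p: "\<forall>i\<in>{1..K}. 0 < p i" and c: "\<forall>i\<in>{1..K}. 0 < c i" and k: "k \<in> {1..K}"
  shows "0 < a k \<and> a k < p k"
proof
  have budget: "(\<Sum>i=1..K. a i * c i) \<le> B"
    using opt unfolding optimal_def feasible_def by simp
  show "0 < a k"
  proof (cases "(\<Sum>i=1..K. a i * c i) < B")
    case True
    then show ?thesis using optimal_pos_of_slack[OF opt _ k] p c k by blast
  next
    case False
    with budget have "(\<Sum>i=1..K. a i * c i) = B" by simp
    then show ?thesis by (rule optimal_pos_of_tight[OF opt _ \<open>0 < B\<close> p c k])
  qed
  show "a k < p k"
    using optimal_lt_capacity[OF opt k] p c k by blast
qed

lemma pk_pos: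
  assumes "finite V" "edge_partition V K part" "k \<in> {1..K}"
  shows "0 < pk V part k"
proof -
  have "part k \<noteq> {}" and sub: "part k \<subseteq> possible_edges V"
    using assms(2,3) unfolding edge_partition_def by auto
  then obtain e where "e \<in> part k" by blast
  with sub have "e \<subseteq> V" "card e = 2" unfolding possible_edges_def by auto
  then have "V \<noteq> {}" by auto
  moreover have "finite (part k)"
    using sub assms(1) unfolding possible_edges_def by (auto intro: finite_subset[of _ "Pow V"])
  ultimately show ?thesis
    using \<open>part k \<noteq> {}\<close> assms(1) unfolding pk_def by (simp add: card_gt_0_iff)
qed

theorem lemma1:
  fixes V :: "'v set" and K :: nat and part :: "nat \<Rightarrow> 'v set set"
    and c :: "nat \<Rightarrow> real" and B :: real and a :: "nat \<Rightarrow> real"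
  assumes "finite V"
    and "edge_partition V K part"
    and "\<forall>k\<in>{1..K}. 0 < c k"
    and "0 < B"
    and "optimal K (pk V part) c B a"
  shows "a \<in> setD K (pk V part) c B"
proof -
  have "\<forall>k\<in>{1..K}. 0 < pk V part k"
    using pk_pos[OF assms(1,2)] by blast
  then have "\<forall>k\<in>{1..K}. 0 < a k \<and> a k < pk V part k"
    using optimal_interior[OF assms(5,4) _ assms(3)] by blast
  moreover have "(\<Sum>k=1..K. c k * a k) \<le> B"
    using assms(5) unfolding optimal_def feasible_def by (simp add: mult.commute)
  ultimately show ?thesis
    unfolding setD_def by simp
qed

end
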